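(* Assume the setting in the context. There are universal constants $C_1,C_2>0$ (independent of $B,R,d,n,\delta$) such that for every $\delta\in(0,1)$, with probability at least $1-\delta$ over the sample, every $w\in\mathbb R^d$ with $\|w\|_2\le R$ and $\nabla\widehat L(w)=0$ satisfies $$\|w-w_\star\|_2\le \frac{C_1B}{\gamma^2\lambda}\sqrt{\frac{d\,(C_2+\log(nBR))+\log(1/\delta)}{n}}.$$
   Context: Generalized linear model: pairs $(x,y)$ are drawn from a distribution $D$ on $\mathbb R^d\times\mathbb R$ where $x\sim D_x$ and $y=\sigma(w_\star^\top x)+\epsilon$, with $\epsilon$ a mean-zero noise independent of $x$, $\sigma:\mathbb R\to\mathbb R$ a known function and $w_\star\in\mathbb R^d$ unknown. Assumptions: (1) $D_x$ is supported in $\{x:\|x\|_2\le B\}$ and $\mathbb E[xx^\top]\succeq \lambda I$ for some $\lambda>0$; (2) $\|w_\star\|_2\le R$ and $BR\ge1$; (3) $\sigma$ is strictly increasing, twice differentiable, $\sigma(t)\in[0,1]$, $\sup_t\max(|\sigma'(t)|,|\sigma''(t)|)\le1$, and $\inf_{t\in[-BR,BR]}\sigma'(t)\ge\gamma>0$; (4) $|\epsilon|\le1$ almost surely. Given i.i.d. samples $(x_i,y_i)_{i=1}^n\sim D$, the empirical risk is $\widehat L(w)=\frac1{2n}\sum_{i=1}^n(y_i-\sigma(w^\top x_i))^2$. *)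

theory Defs
  imports "HOL-Probability.Probability"
begin

text \<open>Vectors of R^d are represented as functions nat => real; only the
coordinates 0..d-1 matter.  The measurable space of covariates is the
finite product space PiM {..<d} (borel).\<close>

definition dotp :: "nat \<Rightarrow> (nat \<Rightarrow> real) \<Rightarrow> (nat \<Rightarrow> real) \<Rightarrow> real" where
  "dotp d w x = (\<Sum>i<d. w i * x i)"

definition vec_space :: "nat \<Rightarrow> (nat \<Rightarrow> real) measure" where
  "vec_space d = Pi\<^sub>M {..<d} (\<lambda>_. borel)"

definition link_ok :: "(real \<Rightarrow> real) \<Rightarrow> real \<Rightarrow> real \<Rightarrow> real \<Rightarrow> bool" where
  "link_ok \<sigma> B R \<gamma> \<longleftrightarrow> strict_mono \<sigma> \<and> (\<forall>t. 0 \<le> \<sigma> t \<and> \<sigma> t \<le> 1) \<and> \<gamma> > 0 \<and>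
     (\<exists>\<sigma>1 \<sigma>2. (\<forall>t. (\<sigma> has_real_derivative \<sigma>1 t) (at t)) \<and>
               (\<forall>t. (\<sigma>1 has_real_derivative \<sigma>2 t) (at t)) \<and>
               (\<forall>t. \<bar>\<sigma>1 t\<bar> \<le> 1 \<and> \<bar>\<sigma>2 t\<bar> \<le> 1) \<and>
               (\<forall>t\<in>{-(B*R)..B*R}. \<sigma>1 t \<ge> \<gamma>))"

definition covariates_ok :: "nat \<Rightarrow> real \<Rightarrow> real \<Rightarrow> (nat \<Rightarrow> real) measure \<Rightarrow> bool" where
  "covariates_ok d B lam Dx \<longleftrightarrow> prob_space Dx \<and> sets Dx = sets (vec_space d) \<and> lam > 0 \<and>
     (AE x in Dx. L2_set x {..<d} \<le> B) \<and>
     (\<forall>v. (\<integral>x. (dotp d v x)\<^sup>2 \<partial>Dx) \<ge> lam * (\<Sum>i<d. (v i)\<^sup>2))"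

definition noise_ok :: "real measure \<Rightarrow> bool" where
  "noise_ok Ne \<longleftrightarrow> prob_space Ne \<and> sets Ne = sets borel \<and>
     (AE e in Ne. \<bar>e\<bar> \<le> 1) \<and> (\<integral>e. e \<partial>Ne) = 0"

definition glm_dist :: "nat \<Rightarrow> (real \<Rightarrow> real) \<Rightarrow> (nat \<Rightarrow> real) \<Rightarrow> (nat \<Rightarrow> real) measure
     \<Rightarrow> real measure \<Rightarrow> ((nat \<Rightarrow> real) \<times> real) measure" where
  "glm_dist d \<sigma> wstar Dx Ne =
     distr (Dx \<Otimes>\<^sub>M Ne) (vec_space d \<Otimes>\<^sub>M borel) (\<lambda>(x, e). (x, \<sigma> (dotp d wstar x) + e))"

definition sample_measure :: "nat \<Rightarrow> ((nat \<Rightarrow> real) \<times> real) measure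
     \<Rightarrow> (nat \<Rightarrow> (nat \<Rightarrow> real) \<times> real) measure" where
  "sample_measure n D = Pi\<^sub>M {..<n} (\<lambda>_. D)"

definition emp_risk :: "nat \<Rightarrow> nat \<Rightarrow> (real \<Rightarrow> real) \<Rightarrow> (nat \<Rightarrow> (nat \<Rightarrow> real) \<times> real)
     \<Rightarrow> (nat \<Rightarrow> real) \<Rightarrow> real" where
  "emp_risk d n \<sigma> S w = (1 / (2 * real n)) * (\<Sum>i<n. (snd (S i) - \<sigma> (dotp d w (fst (S i))))\<^sup>2)"

definition grad_zero :: "nat \<Rightarrow> ((nat \<Rightarrow> real) \<Rightarrow> real) \<Rightarrow> (nat \<Rightarrow> real) \<Rightarrow> bool" where
  "grad_zero d L w \<longleftrightarrow>
     (\<forall>j<d. ((\<lambda>t. L (w(j := w j + t))) has_real_derivative 0) (at 0))"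

end

theory Submission
  imports Defs
begin

text \<open>
Write the directional derivative of the loss at a sample z = (x, y) as
\<open>\<phi>\<^sub>w\<^sub>,\<^sub>g(z) = (\<sigma>(w\<cdot>x) - y) \<sigma>'(w\<cdot>x) (g\<cdot>x)\<close>. Its mean \<open>P(w, g)\<close> under D is linear in g,
Lipschitz in w, and satisfies \<open>P(w, w - w\<^sub>\<star>) \<ge> \<gamma>\<^sup>2 \<lambda> \<parallel>w - w\<^sub>\<star>\<parallel>\<^sup>2\<close>: integrating out the
mean-zero noise leaves \<open>(\<sigma>(w\<cdot>x) - \<sigma>(w\<^sub>\<star>\<cdot>x)) \<sigma>'(w\<cdot>x) (w - w\<^sub>\<star>)\<cdot>x\<close>, and \<open>\<sigma>' \<ge> \<gamma>\<close> on
\<open>[-BR, BR]\<close>. Hoeffding's inequality and a union bound over a finite grid of pairs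
\<open>(w', g)\<close> make the empirical averages of \<open>\<phi>\<close> uniformly t-close to P with probability
\<open>1 - \<delta>\<close>. At a critical point w of the empirical risk those averages vanish, so by the
Lipschitz bound \<open>|P(w, g)| \<le> t + O(B/n)\<close> on a grid of directions, which forces the
population gradient at w to have norm \<open>\<le> 2(t + O(B/n))\<close>; testing it against
\<open>w - w\<^sub>\<star>\<close> gives the claim. The grids have \<open>(5nBRd)\<^sup>d (3d)\<^sup>d\<close> points, whence the
\<open>d log(nBR)\<close> term; for \<open>d > n\<close> the claimed bound exceeds 2R and is trivial.
\<close>

abbreviation vnorm :: "nat \<Rightarrow> (nat \<Rightarrow> real) \<Rightarrow> real" where
  "vnorm d w \<equiv> L2_set w {..<d}"

definition unit_vec :: "nat \<Rightarrow> nat \<Rightarrow> real" where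
  "unit_vec j = (\<lambda>i. if i = j then 1 else 0)"

lemma abs_dotp_le: "\<bar>dotp d w x\<bar> \<le> vnorm d w * vnorm d x"
proof -
  have "\<bar>dotp d w x\<bar> \<le> (\<Sum>i<d. \<bar>w i\<bar> * \<bar>x i\<bar>)"
    unfolding dotp_def by (rule order_trans[OF sum_abs]) (simp add: abs_mult)
  also have "\<dots> \<le> vnorm d w * vnorm d x" by (rule L2_set_mult_ineq)
  finally show ?thesis .
qed

lemma abs_dotp_le_bound: "vnorm d x \<le> B \<Longrightarrow> \<bar>dotp d v x\<bar> \<le> vnorm d v * B"
  using abs_dotp_le[of d v x] by (meson L2_set_nonneg mult_left_mono order_trans)

lemma dotp_diff_left: "dotp d (\<lambda>i. w i - v i) x = dotp d w x - dotp d v x"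
  unfolding dotp_def by (simp add: left_diff_distrib sum_subtractf)

lemma dotp_fun_upd: "j < d \<Longrightarrow> dotp d (w(j := w j + t)) x = dotp d w x + t * x j"
proof -
  assume j: "j < d"
  have "dotp d (w(j := w j + t)) x = (\<Sum>i<d. w i * x i + (if i = j then t * x i else 0))"
    unfolding dotp_def by (intro sum.cong) (auto simp: algebra_simps)
  also have "\<dots> = dotp d w x + t * x j"
    using j by (simp add: sum.distrib dotp_def)
  finally show ?thesis .
qed

lemma dotp_unit_vec: "j < d \<Longrightarrow> dotp d (unit_vec j) x = x j"
proof -
  assume "j < d"
  have "dotp d (unit_vec j) x = (\<Sum>i<d. if i = j then x i else 0)"
    unfolding dotp_def unit_vec_def by (intro sum.cong) auto
  then show ?thesis using \<open>j < d\<close> by simp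
qed

lemma dotp_self: "dotp d w w = (vnorm d w)\<^sup>2"
  unfolding dotp_def L2_set_def by (simp add: sum_nonneg power2_eq_square)

lemma vnorm_diff_le: "vnorm d (\<lambda>i. w i - v i) \<le> vnorm d w + vnorm d v"
proof -
  have "vnorm d (\<lambda>i. w i + (- v i)) \<le> vnorm d w + vnorm d (\<lambda>i. - v i)"
    by (rule L2_set_triangle_ineq)
  then show ?thesis unfolding L2_set_def by simp
qed

lemma abs_le_vnorm: "j < d \<Longrightarrow> \<bar>w j\<bar> \<le> vnorm d w"
proof -
  assume "j < d"
  then have "\<bar>w j\<bar> \<le> L2_set (\<lambda>i. \<bar>w i\<bar>) {..<d}"
    by (intro member_le_L2_set) auto
  then show ?thesis unfolding L2_set_def by simp
qed

lemma vnorm_le_sqrt_dim: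
  assumes "\<And>j. j < d \<Longrightarrow> \<bar>f j\<bar> \<le> c"
  shows "vnorm d f \<le> c * sqrt d"
proof (cases "d = 0")
  case False
  then have c: "0 \<le> c" using assms[of 0] by simp
  have "vnorm d f = L2_set (\<lambda>i. \<bar>f i\<bar>) {..<d}" unfolding L2_set_def by simp
  also have "\<dots> \<le> L2_set (\<lambda>i. c) {..<d}"
    by (rule L2_set_mono) (use assms in auto)
  also have "\<dots> = c * sqrt d" using c by (simp add: L2_set_constant)
  finally show ?thesis .
qed simp

lemma le_of_mult_square_le:
  fixes c x a :: real
  assumes "c > 0" "a \<ge> 0" "x \<ge> 0" "c * x\<^sup>2 \<le> x * a"
  shows "x \<le> a / c"
proof (cases "x = 0")
  case False
  then have "c * x \<le> a" using assms by (simp add: power2_eq_square mult_ac)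
  then show ?thesis using assms(1) by (simp add: field_simps)
qed (use assms in simp)

section \<open>Grids\<close>

definition grid :: "real \<Rightarrow> nat \<Rightarrow> nat \<Rightarrow> (nat \<Rightarrow> real) set" where
  "grid h M d = PiE {..<d} (\<lambda>_. (\<lambda>k::int. h * of_int k) ` {-int M..int M})"

lemma finite_grid: "finite (grid h M d)"
  unfolding grid_def by (intro finite_PiE) auto

lemma card_grid_le: "card (grid h M d) \<le> (2*M+1)^d"
proof -
  have "card (grid h M d) = (\<Prod>i<d. card ((\<lambda>k::int. h * of_int k) ` {-int M..int M}))"
    unfolding grid_def by (simp add: card_PiE)
  also have "\<dots> \<le> (\<Prod>i<d. 2*M+1)"
    by (intro prod_mono conjI order_trans[OF card_image_le]) auto
  finally show ?thesis by simp
qed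

lemma zero_in_grid: "(\<lambda>j. if j < d then 0 else undefined) \<in> grid h M d"
  unfolding grid_def PiE_iff extensional_def by (auto intro!: image_eqI[where x=0])

lemma grid_round:
  assumes h: "h > 0" and v: "\<And>j. j < d \<Longrightarrow> \<bar>v j\<bar> \<le> h * M"
  shows "\<exists>g\<in>grid h M d. \<forall>j<d. \<bar>v j - g j\<bar> \<le> h / 2"
proof -
  define g where "g = (\<lambda>j. if j < d then h * of_int (round (v j / h)) else undefined)"
  have r: "\<bar>v j / h - of_int (round (v j / h))\<bar> \<le> 1/2" for j
    using of_int_round_abs_le[of "v j / h"] by (simp add: abs_minus_commute)
  have "g j \<in> (\<lambda>k::int. h * of_int k) ` {-int M..int M}" if j: "j \<in> {..<d}" for j
  proof -
    have "\<bar>v j / h\<bar> \<le> M" using v[of j] j h by (auto simp: abs_divide divide_le_eq mult.commute)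
    then have "\<bar>round (v j / h)\<bar> \<le> int M" using r[of j] by linarith
    then show ?thesis using j unfolding g_def by (auto simp: abs_le_iff)
  qed
  moreover have "g \<in> extensional {..<d}" by (auto simp: g_def extensional_def)
  ultimately have "g \<in> grid h M d" unfolding grid_def PiE_iff by blast
  moreover have "\<bar>v j - g j\<bar> \<le> h / 2" if "j < d" for j
  proof -
    have "v j - g j = h * (v j / h - of_int (round (v j / h)))"
      using that h by (simp add: g_def field_simps)
    then have "\<bar>v j - g j\<bar> = h * \<bar>v j / h - of_int (round (v j / h))\<bar>"
      using h by (simp add: abs_mult)
    also have "\<dots> \<le> h * (1/2)" using r[of j] h by (intro mult_left_mono) auto
    finally show ?thesis by simp
  qed
  ultimately show ?thesis by blast
qed

text \<open>The mesh \<open>1/(Bnd)\<close> is chosen so that rounding w to the grid costs only \<open>O(B/n)\<close>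
through the \<open>3B\<^sup>2\<close>-Lipschitz bound on the loss derivative.\<close>

definition param_net :: "nat \<Rightarrow> nat \<Rightarrow> real \<Rightarrow> real \<Rightarrow> (nat \<Rightarrow> real) set" where
  "param_net d n B R = grid (1 / (B * n * d)) (nat \<lceil>R * B * n * d\<rceil>) d"

definition direction_net :: "nat \<Rightarrow> (nat \<Rightarrow> real) set" where
  "direction_net d = {g \<in> grid (1 / d) d d. vnorm d g \<le> 3/2}"

lemma finite_param_net: "finite (param_net d n B R)"
  unfolding param_net_def by (rule finite_grid)

lemma finite_direction_net: "finite (direction_net d)"
  unfolding direction_net_def using finite_grid by auto

lemma zero_in_param_net: "(\<lambda>j. if j < d then 0 else undefined) \<in> param_net d n B R"
  unfolding param_net_def by (rule zero_in_grid)

lemma zero_in_direction_net: "(\<lambda>j. if j < d then 0 else undefined) \<in> direction_net d"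
  unfolding direction_net_def using zero_in_grid by (auto simp: L2_set_0')

lemma card_param_net_le:
  assumes "n > 0" "d > 0" "B * R \<ge> 1"
  shows "real (card (param_net d n B R)) \<le> (5 * R * B * n * d) ^ d"
proof -
  define M where "M = nat \<lceil>R * B * n * d\<rceil>"
  have "real n * real d \<ge> 1 * 1" using assms by (intro mult_mono) auto
  then have "R * B * (real n * real d) \<ge> 1 * 1"
    using assms by (intro mult_mono) (auto simp: mult.commute)
  then have RBnd: "R * B * n * d \<ge> 1" by (simp add: mult_ac)
  then have M: "real M \<le> R * B * n * d + 1" unfolding M_def by linarith
  have "real (card (param_net d n B R)) \<le> real ((2*M+1)^d)"
    unfolding param_net_def M_def[symmetric] using card_grid_le by (simp only: of_nat_le_iff)
  also have "\<dots> = (2 * real M + 1) ^ d" by (simp add: add.commute)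
  also have "\<dots> \<le> (5 * R * B * n * d) ^ d"
    using M RBnd by (intro power_mono) auto
  finally show ?thesis .
qed

lemma card_direction_net_le:
  assumes "d > 0"
  shows "real (card (direction_net d)) \<le> (3 * real d) ^ d"
proof -
  have "card (direction_net d) \<le> (2*d+1)^d"
    unfolding direction_net_def
    by (rule order_trans[OF card_mono[OF finite_grid] card_grid_le]) auto
  then have "real (card (direction_net d)) \<le> real ((2*d+1)^d)" by (simp only: of_nat_le_iff)
  also have "\<dots> = (2 * real d + 1) ^ d" by (simp add: add.commute)
  also have "\<dots> \<le> (3 * real d) ^ d" using assms by (intro power_mono) auto
  finally show ?thesis .
qed

lemma card_nets:
  assumes "n > 0" "d > 0" "B > 0" "R > 0" "1 \<le> B * R"
  shows "1 \<le> real (card (param_net d n B R \<times> direction_net d))"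
    and "real (card (param_net d n B R \<times> direction_net d)) \<le> (5 * R * B * n * d) ^ d * (3 * real d) ^ d"
proof -
  have "finite (param_net d n B R \<times> direction_net d)" "param_net d n B R \<times> direction_net d \<noteq> {}"
    using finite_param_net finite_direction_net zero_in_param_net zero_in_direction_net by blast+
  then show "1 \<le> real (card (param_net d n B R \<times> direction_net d))"
    by (simp add: Suc_leI card_gt_0_iff)
  have "real (card (param_net d n B R \<times> direction_net d))
      = real (card (param_net d n B R)) * real (card (direction_net d))"
    by (simp add: card_cartesian_product)
  also have "\<dots> \<le> (5 * R * B * n * d) ^ d * (3 * real d) ^ d"
    using assms by (intro mult_mono card_param_net_le card_direction_net_le) auto
  finally show "real (card (param_net d n B R \<times> direction_net d)) \<le> (5 * R * B * n * d) ^ d * (3 * real d) ^ d" .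
qed

lemma param_net_approx:
  assumes d: "d > 0" and n: "n > 0" and B: "B > 0" and w: "vnorm d w \<le> R"
  shows "\<exists>w'\<in>param_net d n B R. vnorm d (\<lambda>i. w i - w' i) \<le> 1 / (2 * B * n)"
proof -
  define h where "h = 1 / (B * n * d)"
  define M where "M = nat \<lceil>R * B * n * d\<rceil>"
  have h0: "h > 0" using B n d by (simp add: h_def)
  have "R * B * n * d \<le> M" unfolding M_def by linarith
  then have "R * B * n * d * h \<le> M * h" using h0 by (intro mult_right_mono) auto
  moreover have "R * B * n * d * h = R" using B n d by (simp add: h_def)
  ultimately have "R \<le> h * M" by (metis mult.commute)
  then have "\<bar>w j\<bar> \<le> h * M" if "j < d" for j
    using abs_le_vnorm[OF that, of w] w by linarith
  then obtain w' where w': "w' \<in> param_net d n B R" and close: "\<forall>j<d. \<bar>w j - w' j\<bar> \<le> h / 2"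
    using grid_round[OF h0] unfolding param_net_def h_def[symmetric] M_def[symmetric] by blast
  have "vnorm d (\<lambda>i. w i - w' i) \<le> h / 2 * sqrt d" using close by (intro vnorm_le_sqrt_dim) auto
  also have "\<dots> \<le> h / 2 * d"
    using h0 d by (intro mult_left_mono) (auto simp: real_sqrt_le_iff' power2_eq_square le_square)
  also have "h / 2 * d = 1 / (2 * B * n)" using d by (simp add: h_def)
  finally show ?thesis using w' by blast
qed

text \<open>The directions of norm at most 3/2 form a 1/2-net of the unit sphere, so they
determine the norm of a vector up to a factor 2.\<close>

lemma vnorm_le_of_direction_net:
  assumes d: "d > 0" and K: "K \<ge> 0" and bound: "\<And>g. g \<in> direction_net d \<Longrightarrow> dotp d g p \<le> K"
  shows "vnorm d p \<le> 2 * K"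
proof (cases "vnorm d p = 0")
  case False
  then have np: "vnorm d p > 0" using L2_set_nonneg[of p "{..<d}"] by linarith
  define v where "v = (\<lambda>j. p j * (1 / vnorm d p))"
  have nv: "vnorm d v = 1"
    using L2_set_left_distrib[of "1 / vnorm d p" p "{..<d}"] np unfolding v_def by simp
  have "\<bar>v j\<bar> \<le> 1 / d * d" if "j < d" for j
    using abs_le_vnorm[OF that, of v] nv d by simp
  then obtain g where g: "g \<in> grid (1/d) d d" and close: "\<forall>j<d. \<bar>v j - g j\<bar> \<le> 1 / d / 2"
    using grid_round[of "1/d" d v d] d by auto
  have nvg: "vnorm d (\<lambda>i. v i - g i) \<le> 1/2"
  proof -
    have "vnorm d (\<lambda>i. v i - g i) \<le> 1 / d / 2 * sqrt d" using close by (intro vnorm_le_sqrt_dim) auto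
    also have "\<dots> = 1 / (2 * sqrt d)"
      using d by (simp add: field_simps real_sqrt_mult[symmetric] power2_eq_square[symmetric])
    also have "\<dots> \<le> 1/2" using d by (simp add: divide_simps)
    finally show ?thesis .
  qed
  have "vnorm d g \<le> vnorm d v + vnorm d (\<lambda>i. v i - g i)"
    using vnorm_diff_le[where w = v and v = "\<lambda>i. v i - g i"] by simp
  then have "g \<in> direction_net d" using g nv nvg by (simp add: direction_net_def)
  have "vnorm d p = dotp d v p"
    using dotp_self[of d p] np unfolding v_def dotp_def
    by (simp add: power2_eq_square sum_divide_distrib[symmetric])
  also have "\<dots> = dotp d g p + dotp d (\<lambda>i. v i - g i) p" by (simp add: dotp_diff_left)
  also have "\<dots> \<le> K + vnorm d (\<lambda>i. v i - g i) * vnorm d p"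
    using bound[OF \<open>g \<in> direction_net d\<close>] abs_dotp_le[of d "\<lambda>i. v i - g i" p] by linarith
  also have "\<dots> \<le> K + 1/2 * vnorm d p" using nvg np by (intro add_left_mono mult_right_mono) auto
  finally show ?thesis by linarith
qed (use K in simp)

lemma hoeffding_radius:
  fixes B \<delta> N t :: real and n :: nat
  assumes n: "n > 0" and B: "B > 0" and N: "1 \<le> N" and \<delta>: "0 < \<delta>" "\<delta> < 1"
  defines "t \<equiv> 3 * B * sqrt (2 * ln (2 * N / \<delta>) / n)"
  shows "0 \<le> t" and "N * (2 * exp (- (n * t\<^sup>2) / (18 * B\<^sup>2))) = \<delta>"
proof -
  have "1 \<le> 2 * N / \<delta>" using N \<delta> by (simp add: field_simps)
  then have ln: "0 \<le> ln (2 * N / \<delta>)" by simp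
  then show "0 \<le> t" unfolding t_def using B by simp
  have "t\<^sup>2 = 9 * B\<^sup>2 * (2 * ln (2 * N / \<delta>) / n)"
    unfolding t_def using ln by (simp add: power_mult_distrib)
  then have "- (n * t\<^sup>2) / (18 * B\<^sup>2) = - ln (2 * N / \<delta>)" using n B by (simp add: field_simps)
  moreover have "exp (- ln (2 * N / \<delta>)) = \<delta> / (2 * N)" using N \<delta> by (simp add: exp_minus)
  ultimately show "N * (2 * exp (- (n * t\<^sup>2) / (18 * B\<^sup>2))) = \<delta>" using N by simp
qed

text \<open>Here \<open>d \<le> n\<close> is used to absorb \<open>ln d\<close> into \<open>ln (nBR)\<close>.\<close>

lemma ln_net_size_le:
  fixes n d :: nat and B R \<delta> N :: real
  assumes d: "0 < d" "d \<le> n" and B: "B > 0" and R: "R > 0" and BR: "1 \<le> B * R"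
    and \<delta>: "0 < \<delta>" "\<delta> < 1" and N: "1 \<le> N" "N \<le> (5 * R * B * n * d) ^ d * (3 * real d) ^ d"
  shows "ln (2 * N / \<delta>) \<le> 3 * (d * (30 + ln (n * B * R)) + ln (1 / \<delta>))"
proof -
  define L where "L = ln (n * B * R)"
  have "real n * 1 \<le> n * (B * R)" using BR by (intro mult_left_mono) auto
  then have lnn: "ln n \<le> L" unfolding L_def using d by (intro ln_mono) (auto simp: mult.assoc)
  have "ln (real d) \<le> ln (real n)" "0 \<le> ln (real n)" using d by simp_all
  with lnn have lnd: "ln d \<le> L" and L0: "0 \<le> L" by linarith+
  have l5: "ln (5::real) \<le> 4" and l3: "ln (3::real) \<le> 2" and l2: "ln (2::real) \<le> 1"
    using ln_le_minus_one[of 5] ln_le_minus_one[of 3] ln_le_minus_one[of 2] by simp_all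
  have "ln (5 * R * B * n * d) = ln 5 + L + ln d"
    unfolding L_def using R B d by (simp add: ln_mult mult_ac)
  moreover have "ln (3 * real d) = ln 3 + ln d" using d by (simp add: ln_mult)
  moreover have "ln N \<le> ln ((5 * R * B * n * d) ^ d * (3 * real d) ^ d)"
    using N by (intro ln_mono) auto
  moreover have "ln ((5 * R * B * n * d) ^ d * (3 * real d) ^ d)
      = d * ln (5 * R * B * n * d) + d * ln (3 * real d)"
    using R B d by (simp add: ln_mult ln_realpow distrib_left)
  ultimately have "ln N \<le> d * (ln 5 + L + ln d) + d * (ln 3 + ln d)" by simp
  also have "\<dots> \<le> d * (4 + L + L) + d * (2 + L)"
    using l5 l3 lnd by (intro add_mono mult_left_mono) auto
  finally have lnN: "ln N \<le> d * (6 + 3 * L)" by (simp add: algebra_simps)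
  have "ln (2 * N / \<delta>) = ln 2 + ln N + ln (1/\<delta>)"
    using N \<delta> by (simp add: ln_mult ln_div)
  moreover have "1 + d * (6 + 3 * L) \<le> d * (90 + 3 * L)" using d L0 by (simp add: algebra_simps)
  moreover have "3 * (d * (30 + L) + ln (1 / \<delta>)) = d * (90 + 3 * L) + 3 * ln (1 / \<delta>)"
    by (simp add: algebra_simps)
  moreover have "0 \<le> ln (1 / \<delta>)" using \<delta> by simp
  ultimately show ?thesis unfolding L_def[symmetric] using lnN l2 by linarith
qed

lemma deviation_rate_le:
  fixes n :: nat and B a X :: real
  assumes n: "n > 0" and B: "B > 0" and a: "a \<le> 3 * X" and X: "1 \<le> X"
  shows "2 * (3 * B * sqrt (2 * a / n)) + 9 * B / n \<le> 24 * B * sqrt (X / n)"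
proof -
  have "sqrt (2 * a / n) \<le> sqrt 6 * sqrt (X / n)"
    using a n by (simp add: real_sqrt_mult[symmetric] divide_right_mono)
  also have "\<dots> \<le> 5/2 * sqrt (X / n)"
  proof (rule mult_right_mono)
    show "sqrt 6 \<le> 5/2" by (rule real_le_lsqrt) (simp_all add: power2_eq_square)
    show "0 \<le> sqrt (X / n)" using X by simp
  qed
  finally have "sqrt (2 * a / n) \<le> 5/2 * sqrt (X / n)" .
  moreover have "1 / real n \<le> sqrt (X / n)"
  proof (rule real_le_rsqrt)
    have "(1 / real n)\<^sup>2 \<le> 1 / n" using n by (simp add: power2_eq_square divide_simps)
    also have "\<dots> \<le> X / n" using X by (simp add: divide_right_mono)
    finally show "(1 / real n)\<^sup>2 \<le> X / n" .
  qed
  ultimately have "2 * (3 * B * sqrt (2 * a / n)) + 9 * B * (1 / n)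
      \<le> 2 * (3 * B * (5/2 * sqrt (X / n))) + 9 * B * sqrt (X / n)"
    using B by (intro add_mono mult_left_mono) auto
  then show ?thesis by simp
qed

section \<open>The loss and the link function\<close>

definition loss_deriv :: "(real \<Rightarrow> real) \<Rightarrow> (real \<Rightarrow> real) \<Rightarrow> nat \<Rightarrow> (nat \<Rightarrow> real)
    \<Rightarrow> (nat \<Rightarrow> real) \<Rightarrow> (nat \<Rightarrow> real) \<times> real \<Rightarrow> real" where
  "loss_deriv \<sigma> \<sigma>' d w g z = (\<sigma> (dotp d w (fst z)) - snd z) * \<sigma>' (dotp d w (fst z)) * dotp d g (fst z)"

lemma loss_deriv_linear: "loss_deriv \<sigma> \<sigma>' d w g z = dotp d g (\<lambda>j. loss_deriv \<sigma> \<sigma>' d w (unit_vec j) z)"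
proof -
  let ?c = "(\<sigma> (dotp d w (fst z)) - snd z) * \<sigma>' (dotp d w (fst z))"
  have "dotp d g (\<lambda>j. loss_deriv \<sigma> \<sigma>' d w (unit_vec j) z) = (\<Sum>j<d. g j * (?c * fst z j))"
    unfolding dotp_def[of d g] loss_deriv_def by (intro sum.cong) (simp_all add: dotp_unit_vec)
  moreover have "loss_deriv \<sigma> \<sigma>' d w g z = (\<Sum>j<d. g j * (?c * fst z j))"
    unfolding loss_deriv_def dotp_def[of d g] by (simp add: sum_distrib_left mult_ac)
  ultimately show ?thesis by simp
qed

locale smooth_link =
  fixes \<sigma> \<sigma>' \<sigma>'' :: "real \<Rightarrow> real"
  assumes range: "\<And>t. 0 \<le> \<sigma> t \<and> \<sigma> t \<le> 1"
    and has_deriv: "\<And>t. (\<sigma> has_real_derivative \<sigma>' t) (at t)"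
    and has_deriv2: "\<And>t. (\<sigma>' has_real_derivative \<sigma>'' t) (at t)"
    and deriv_bounded: "\<And>t. \<bar>\<sigma>' t\<bar> \<le> 1"
    and deriv2_bounded: "\<And>t. \<bar>\<sigma>'' t\<bar> \<le> 1"
begin

lemma abs_loss_deriv_le:
  assumes "vnorm d (fst z) \<le> B" "-1 \<le> snd z" "snd z \<le> 2"
  shows "\<bar>loss_deriv \<sigma> \<sigma>' d w g z\<bar> \<le> 2 * B * vnorm d g"
proof -
  let ?a = "dotp d w (fst z)"
  have "\<bar>\<sigma> ?a - snd z\<bar> \<le> 2" using range[of ?a] assms by auto
  moreover have "0 \<le> B" using assms(1) L2_set_nonneg order_trans by blast
  ultimately have "\<bar>\<sigma> ?a - snd z\<bar> * \<bar>\<sigma>' ?a\<bar> * \<bar>dotp d g (fst z)\<bar> \<le> 2 * 1 * (vnorm d g * B)"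
    by (intro mult_mono abs_dotp_le_bound assms(1) deriv_bounded) auto
  then show ?thesis unfolding loss_deriv_def by (simp add: abs_mult mult_ac)
qed

lemma loss_deriv_lipschitz:
  assumes "vnorm d (fst z) \<le> B" "-1 \<le> snd z" "snd z \<le> 2"
  shows "\<bar>loss_deriv \<sigma> \<sigma>' d w g z - loss_deriv \<sigma> \<sigma>' d w' g z\<bar>
           \<le> 3 * B\<^sup>2 * vnorm d (\<lambda>i. w i - w' i) * vnorm d g"
proof -
  define f where "f = (\<lambda>t. (\<sigma> t - snd z) * \<sigma>' t)"
  define f' where "f' = (\<lambda>t. \<sigma>' t * \<sigma>' t + (\<sigma> t - snd z) * \<sigma>'' t)"
  have df: "(f has_field_derivative f' t) (at t within UNIV)" for t
    unfolding f_def f'_def by (auto intro!: derivative_eq_intros has_deriv has_deriv2)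
  have "norm (f' t) \<le> 3" for t
  proof -
    have "\<bar>\<sigma> t - snd z\<bar> \<le> 2" using range[of t] assms by auto
    then have "\<bar>(\<sigma> t - snd z) * \<sigma>'' t\<bar> \<le> 2 * 1"
      unfolding abs_mult by (intro mult_mono deriv2_bounded) auto
    moreover have "\<bar>\<sigma>' t * \<sigma>' t\<bar> \<le> 1 * 1" unfolding abs_mult by (intro mult_mono deriv_bounded) auto
    ultimately show ?thesis
      unfolding f'_def real_norm_def
      using abs_triangle_ineq[of "\<sigma>' t * \<sigma>' t" "(\<sigma> t - snd z) * \<sigma>'' t"] by linarith
  qed
  from field_differentiable_bound[OF convex_UNIV df this]
  have f_lip: "\<bar>f a - f b\<bar> \<le> 3 * \<bar>a - b\<bar>" for a b by simp
  let ?a = "dotp d w (fst z)" and ?b = "dotp d w' (fst z)"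
  have B0: "0 \<le> B" using assms(1) L2_set_nonneg order_trans by blast
  have "\<bar>?a - ?b\<bar> \<le> vnorm d (\<lambda>i. w i - w' i) * B"
    using abs_dotp_le_bound[OF assms(1)] by (simp add: dotp_diff_left[symmetric])
  moreover have "\<bar>dotp d g (fst z)\<bar> \<le> vnorm d g * B" by (rule abs_dotp_le_bound[OF assms(1)])
  ultimately have "\<bar>f ?a - f ?b\<bar> * \<bar>dotp d g (fst z)\<bar> \<le> (3 * (vnorm d (\<lambda>i. w i - w' i) * B)) * (vnorm d g * B)"
    using f_lip[of ?a ?b] B0 by (intro mult_mono) auto
  moreover have "\<bar>loss_deriv \<sigma> \<sigma>' d w g z - loss_deriv \<sigma> \<sigma>' d w' g z\<bar> = \<bar>f ?a - f ?b\<bar> * \<bar>dotp d g (fst z)\<bar>"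
    unfolding loss_deriv_def f_def by (simp add: abs_mult[symmetric] left_diff_distrib)
  ultimately show ?thesis by (simp add: power2_eq_square mult_ac)
qed

lemma sum_loss_deriv_lipschitz:
  fixes n :: nat and S :: "nat \<Rightarrow> (nat \<Rightarrow> real) \<times> real"
  assumes "\<And>i. i < n \<Longrightarrow> vnorm d (fst (S i)) \<le> B \<and> -1 \<le> snd (S i) \<and> snd (S i) \<le> 2"
  shows "\<bar>(\<Sum>i<n. loss_deriv \<sigma> \<sigma>' d w g (S i)) - (\<Sum>i<n. loss_deriv \<sigma> \<sigma>' d w' g (S i))\<bar>
           \<le> n * (3 * B\<^sup>2 * vnorm d (\<lambda>i. w i - w' i) * vnorm d g)"
proof -
  have "\<bar>(\<Sum>i<n. loss_deriv \<sigma> \<sigma>' d w g (S i)) - (\<Sum>i<n. loss_deriv \<sigma> \<sigma>' d w' g (S i))\<bar>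
      \<le> (\<Sum>i<n. \<bar>loss_deriv \<sigma> \<sigma>' d w g (S i) - loss_deriv \<sigma> \<sigma>' d w' g (S i)\<bar>)"
    by (simp add: sum_subtractf[symmetric] sum_abs)
  also have "\<dots> \<le> (\<Sum>i<n. 3 * B\<^sup>2 * vnorm d (\<lambda>i. w i - w' i) * vnorm d g)"
    using assms by (intro sum_mono loss_deriv_lipschitz) auto
  finally show ?thesis by simp
qed

lemma secant_ge:
  assumes "\<And>t. t \<in> {-K..K} \<Longrightarrow> \<sigma>' t \<ge> \<gamma>" "a \<in> {-K..K}" "b \<in> {-K..K}"
  shows "\<gamma> * (a - b)\<^sup>2 \<le> (\<sigma> a - \<sigma> b) * (a - b)"
proof -
  have *: "\<gamma> * (q - p)\<^sup>2 \<le> (\<sigma> q - \<sigma> p) * (q - p)"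
    if "p < q" "p \<in> {-K..K}" "q \<in> {-K..K}" for p q
  proof -
    obtain z where z: "p < z" "z < q" "\<sigma> q - \<sigma> p = (q - p) * \<sigma>' z"
      using MVT2[of p q \<sigma> \<sigma>'] \<open>p < q\<close> has_deriv by blast
    then have "\<sigma>' z \<ge> \<gamma>" using assms(1) that by auto
    then have "(q - p)\<^sup>2 * \<gamma> \<le> (q - p)\<^sup>2 * \<sigma>' z" by (intro mult_left_mono) auto
    then show ?thesis using z(3) by (simp add: power2_eq_square mult_ac)
  qed
  consider "a < b" | "a = b" | "b < a" by linarith
  then show ?thesis
    using *[of a b] *[of b a] assms(2,3) by cases (simp_all add: power2_commute algebra_simps)
qed

lemma secant_deriv_ge:
  assumes "\<And>t. t \<in> {-K..K} \<Longrightarrow> \<sigma>' t \<ge> \<gamma>" "\<gamma> \<ge> 0" "a \<in> {-K..K}" "b \<in> {-K..K}"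
  shows "\<gamma>\<^sup>2 * (a - b)\<^sup>2 \<le> (\<sigma> a - \<sigma> b) * \<sigma>' a * (a - b)"
proof -
  have \<gamma>: "\<gamma> \<le> \<sigma>' a" using assms by blast
  have "\<gamma> * (\<gamma> * (a - b)\<^sup>2) \<le> \<sigma>' a * ((\<sigma> a - \<sigma> b) * (a - b))"
    by (rule mult_mono[OF \<gamma> secant_ge[OF assms(1,3,4)]]) (use assms(2) \<gamma> in auto)
  then show ?thesis by (simp add: power2_eq_square mult_ac)
qed

text \<open>\<open>\<sigma>\<close> takes values in [0, 1], so its derivative cannot stay above \<open>\<gamma>\<close> on an
interval longer than \<open>1/\<gamma>\<close>.\<close>

lemma interval_deriv_bound_le_one:
  assumes "\<And>t. t \<in> {-K..K} \<Longrightarrow> \<sigma>' t \<ge> \<gamma>" "K > 0"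
  shows "2 * K * \<gamma> \<le> 1"
proof -
  obtain z where z: "-K < z" "z < K" "\<sigma> K - \<sigma> (-K) = (K - (-K)) * \<sigma>' z"
    using MVT2[of "-K" K \<sigma> \<sigma>'] assms(2) has_deriv by fastforce
  have "2 * K * \<gamma> \<le> 2 * K * \<sigma>' z" using assms z by (intro mult_left_mono) auto
  also have "\<dots> = \<sigma> K - \<sigma> (-K)" using z(3) by simp
  also have "\<dots> \<le> 1" using range[of K] range[of "-K"] by linarith
  finally show ?thesis .
qed

lemma emp_risk_partial_deriv:
  assumes "j < d"
  shows "((\<lambda>t. emp_risk d n \<sigma> S (w(j := w j + t))) has_real_derivative
           (\<Sum>i<n. loss_deriv \<sigma> \<sigma>' d w (unit_vec j) (S i)) / n) (at 0)"
proof -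
  define a where "a = (\<lambda>i. dotp d w (fst (S i)))"
  define x where "x = (\<lambda>i. fst (S i) j)"
  define y where "y = (\<lambda>i. snd (S i))"
  have risk: "emp_risk d n \<sigma> S (w(j := w j + t)) = (1 / (2 * real n)) * (\<Sum>i<n. (y i - \<sigma> (a i + t * x i))\<^sup>2)" for t
    unfolding emp_risk_def a_def x_def y_def using dotp_fun_upd[OF assms] by simp
  have "((\<lambda>t. (y i - \<sigma> (a i + t * x i))\<^sup>2) has_real_derivative
      2 * (y i - \<sigma> (a i + 0 * x i)) * (- (\<sigma>' (a i + 0 * x i) * (0 + 1 * x i)))) (at 0)" for i
    by (auto intro!: derivative_eq_intros DERIV_chain2[OF has_deriv])
  then have deriv: "((\<lambda>t. emp_risk d n \<sigma> S (w(j := w j + t))) has_real_derivative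
      (1 / (2 * real n)) * (\<Sum>i<n. 2 * (y i - \<sigma> (a i)) * (- (\<sigma>' (a i) * x i)))) (at 0)"
    unfolding risk by (intro DERIV_cmult DERIV_sum) simp
  have ld: "loss_deriv \<sigma> \<sigma>' d w (unit_vec j) (S i) = (\<sigma> (a i) - y i) * \<sigma>' (a i) * x i" for i
    unfolding loss_deriv_def a_def x_def y_def using dotp_unit_vec[OF assms] by simp
  have sum: "(\<Sum>i<n. 2 * (y i - \<sigma> (a i)) * (- (\<sigma>' (a i) * x i)))
      = 2 * (\<Sum>i<n. (\<sigma> (a i) - y i) * \<sigma>' (a i) * x i)"
    by (simp add: sum_distrib_left algebra_simps)
  show ?thesis by (rule DERIV_cong[OF deriv]) (simp only: sum ld, simp)
qed

lemma sum_loss_deriv_eq_0: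
  assumes "grad_zero d (emp_risk d n \<sigma> S) w"
  shows "(\<Sum>i<n. loss_deriv \<sigma> \<sigma>' d w g (S i)) = 0"
proof -
  have coord: "(\<Sum>i<n. loss_deriv \<sigma> \<sigma>' d w (unit_vec j) (S i)) = 0" if "j < d" for j
  proof -
    have "(\<Sum>i<n. loss_deriv \<sigma> \<sigma>' d w (unit_vec j) (S i)) / n = 0"
      using DERIV_unique[OF emp_risk_partial_deriv[OF that]] assms that
      unfolding grad_zero_def by blast
    then show ?thesis by (cases "n = 0") auto
  qed
  have "(\<Sum>i<n. loss_deriv \<sigma> \<sigma>' d w g (S i))
      = (\<Sum>j<d. g j * (\<Sum>i<n. loss_deriv \<sigma> \<sigma>' d w (unit_vec j) (S i)))"
    by (subst loss_deriv_linear) (simp add: dotp_def sum_distrib_left sum.swap[of _ "{..<n}"])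
  also have "\<dots> = 0" using coord by simp
  finally show ?thesis .
qed

lemma directional_bound_at_critical_point:
  fixes P :: "(nat \<Rightarrow> real) \<Rightarrow> (nat \<Rightarrow> real) \<Rightarrow> real"
  assumes P_lipschitz: "\<bar>P w g - P w' g\<bar> \<le> 3 * B\<^sup>2 * vnorm d (\<lambda>i. w i - w' i) * vnorm d g"
    and n: "n > 0" and B: "B > 0"
    and samples: "\<And>i. i < n \<Longrightarrow> vnorm d (fst (S i)) \<le> B \<and> -1 \<le> snd (S i) \<and> snd (S i) \<le> 2"
    and close: "\<bar>(\<Sum>i<n. loss_deriv \<sigma> \<sigma>' d w' g (S i)) / n - P w' g\<bar> < t"
    and ww': "vnorm d (\<lambda>i. w i - w' i) \<le> 1 / (2 * B * n)" and g: "vnorm d g \<le> 3/2"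
    and critical: "grad_zero d (emp_risk d n \<sigma> S) w"
  shows "P w g \<le> t + 9 * B / (2 * real n)"
proof -
  have "3 * B\<^sup>2 * vnorm d (\<lambda>i. w i - w' i) * vnorm d g \<le> 3 * B\<^sup>2 * (1 / (2 * B * n)) * (3/2)"
    using g B by (intro mult_mono ww' mult_left_mono) auto
  also have "\<dots> = 9 * B / (4 * n)" using B n by (simp add: power2_eq_square field_simps)
  finally have lip: "3 * B\<^sup>2 * vnorm d (\<lambda>i. w i - w' i) * vnorm d g \<le> 9 * B / (4 * n)" .
  have "\<bar>(\<Sum>i<n. loss_deriv \<sigma> \<sigma>' d w' g (S i))\<bar>
      = \<bar>(\<Sum>i<n. loss_deriv \<sigma> \<sigma>' d w g (S i)) - (\<Sum>i<n. loss_deriv \<sigma> \<sigma>' d w' g (S i))\<bar>"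
    using sum_loss_deriv_eq_0[OF critical] by simp
  also have "\<dots> \<le> n * (3 * B\<^sup>2 * vnorm d (\<lambda>i. w i - w' i) * vnorm d g)"
    by (rule sum_loss_deriv_lipschitz[of n S, OF samples])
  also have "\<dots> \<le> n * (9 * B / (4 * n))" using lip by (intro mult_left_mono) auto
  finally have "\<bar>(\<Sum>i<n. loss_deriv \<sigma> \<sigma>' d w' g (S i)) / n\<bar> \<le> 9 * B / (4 * n)"
    using n by (simp add: abs_divide divide_simps)
  moreover have "9 * B / (4 * n) + 9 * B / (4 * n) = 9 * B / (2 * real n)" by (simp add: field_simps)
  ultimately show ?thesis using close order_trans[OF P_lipschitz lip] by linarith
qed

lemma critical_point_bound:
  fixes P :: "(nat \<Rightarrow> real) \<Rightarrow> (nat \<Rightarrow> real) \<Rightarrow> real"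
  assumes P_linear: "\<And>w g. P w g = dotp d g (\<lambda>j. P w (unit_vec j))"
    and P_lipschitz: "\<And>w w' g. \<bar>P w g - P w' g\<bar> \<le> 3 * B\<^sup>2 * vnorm d (\<lambda>i. w i - w' i) * vnorm d g"
    and P_monotone: "c * (vnorm d (\<lambda>i. w i - wstar i))\<^sup>2 \<le> P w (\<lambda>i. w i - wstar i)"
    and c: "c > 0" and n: "n > 0" and d: "d > 0" and B: "B > 0" and t: "t \<ge> 0"
    and samples: "\<And>i. i < n \<Longrightarrow> vnorm d (fst (S i)) \<le> B \<and> -1 \<le> snd (S i) \<and> snd (S i) \<le> 2"
    and close: "\<And>w' g. w' \<in> param_net d n B R \<Longrightarrow> g \<in> direction_net d \<Longrightarrow>
                 \<bar>(\<Sum>i<n. loss_deriv \<sigma> \<sigma>' d w' g (S i)) / n - P w' g\<bar> < t"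
    and w: "vnorm d w \<le> R" and critical: "grad_zero d (emp_risk d n \<sigma> S) w"
  shows "vnorm d (\<lambda>i. w i - wstar i) \<le> (2 * t + 9 * B / n) / c"
proof -
  define K where "K = t + 9 * B / (2 * real n)"
  obtain w' where w': "w' \<in> param_net d n B R" and ww': "vnorm d (\<lambda>i. w i - w' i) \<le> 1 / (2 * B * n)"
    using param_net_approx[OF d n B w] by blast
  have "P w g \<le> K" if "g \<in> direction_net d" for g
    unfolding K_def using that
    by (intro directional_bound_at_critical_point[where P = P, OF P_lipschitz[of w g w'] n B samples close[OF w' that] ww' _ critical])
      (auto simp: direction_net_def)
  then have grad: "vnorm d (\<lambda>j. P w (unit_vec j)) \<le> 2 * K"
    using d t B by (intro vnorm_le_of_direction_net) (auto simp: K_def P_linear[symmetric])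
  define u where "u = (\<lambda>i. w i - wstar i)"
  have "c * (vnorm d u)\<^sup>2 \<le> dotp d u (\<lambda>j. P w (unit_vec j))"
    using P_monotone P_linear unfolding u_def by metis
  also have "\<dots> \<le> vnorm d u * (2 * K)"
    using abs_dotp_le[of d u] grad by (meson abs_le_D1 L2_set_nonneg mult_left_mono order_trans)
  finally have "vnorm d u \<le> 2 * K / c"
    using c t B n by (intro le_of_mult_square_le) (auto simp: K_def)
  also have "2 * K = 2 * t + 9 * B / n" using n by (simp add: K_def field_simps)
  finally show ?thesis unfolding u_def .
qed

end

section \<open>The population derivative\<close>

lemma measurable_dotp [measurable]: "(\<lambda>x. dotp d w x) \<in> borel_measurable (vec_space d)"
  unfolding dotp_def vec_space_def by measurable

lemma measurable_vnorm [measurable]: "(\<lambda>x. vnorm d x) \<in> borel_measurable (vec_space d)"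
  unfolding L2_set_def vec_space_def by measurable

locale glm_setting = smooth_link +
  fixes d n :: nat and B R lam \<gamma> :: real and wstar :: "nat \<Rightarrow> real"
    and Dx :: "(nat \<Rightarrow> real) measure" and Ne :: "real measure"
  assumes covariates: "covariates_ok d B lam Dx"
    and wstar: "vnorm d wstar \<le> R"
    and BR: "1 \<le> B * R"
    and deriv_lower: "\<And>t. t \<in> {-(B*R)..B*R} \<Longrightarrow> \<gamma> \<le> \<sigma>' t"
    and gamma_pos: "\<gamma> > 0"
    and noise: "noise_ok Ne"
begin

lemma
  shows sets_Dx: "sets Dx = sets (vec_space d)"
    and lam_pos: "lam > 0"
    and AE_Dx_vnorm: "AE x in Dx. vnorm d x \<le> B"
    and covariance_lower: "lam * (\<Sum>i<d. (v i)\<^sup>2) \<le> (\<integral>x. (dotp d v x)\<^sup>2 \<partial>Dx)"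
    and sets_Ne: "sets Ne = sets borel"
    and AE_Ne_abs: "AE e in Ne. \<bar>e\<bar> \<le> 1"
    and noise_mean: "(\<integral>e. e \<partial>Ne) = 0"
  using covariates noise by (auto simp: covariates_ok_def noise_ok_def)

sublocale Dx: prob_space Dx
  using covariates by (simp add: covariates_ok_def)

sublocale Ne: prob_space Ne
  using noise by (simp add: noise_ok_def)

sublocale DN: pair_prob_space Dx Ne ..

lemma R_pos: "R > 0"
  using BR wstar order_trans[OF L2_set_nonneg wstar] by (cases "R = 0") auto

lemma B_pos: "B > 0"
  using BR R_pos mult_nonpos_nonneg[of B R] by linarith

lemma measurable_link [measurable]: "\<sigma> \<in> borel_measurable borel" "\<sigma>' \<in> borel_measurable borel"
  using has_deriv has_deriv2
  by (auto intro!: borel_measurable_continuous_onI continuous_at_imp_continuous_on DERIV_isCont)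

lemma measurable_Dx: "measurable Dx N = measurable (vec_space d) N"
  by (rule measurable_cong_sets[OF sets_Dx refl])

lemma measurable_DN: "measurable (Dx \<Otimes>\<^sub>M Ne) N = measurable (vec_space d \<Otimes>\<^sub>M borel) N"
  by (intro measurable_cong_sets sets_pair_measure_cong sets_Dx sets_Ne refl)

abbreviation D :: "((nat \<Rightarrow> real) \<times> real) measure" where
  "D \<equiv> glm_dist d \<sigma> wstar Dx Ne"

lemma measurable_glm_map:
  "(\<lambda>(x, e). (x, \<sigma> (dotp d wstar x) + e)) \<in> measurable (Dx \<Otimes>\<^sub>M Ne) (vec_space d \<Otimes>\<^sub>M borel)"
  unfolding measurable_DN by measurable

sublocale D: prob_space D
  unfolding glm_dist_def by (rule DN.prob_space_distr[OF measurable_glm_map])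

lemma measurable_D: "measurable D N = measurable (vec_space d \<Otimes>\<^sub>M borel) N"
  by (rule measurable_cong_sets) (simp_all add: glm_dist_def)

text \<open>The support of D: the covariate lies in the B-ball and the noise in [-1, 1].\<close>

definition admissible :: "(nat \<Rightarrow> real) \<times> real \<Rightarrow> bool" where
  "admissible z \<longleftrightarrow> vnorm d (fst z) \<le> B \<and> \<bar>snd z - \<sigma> (dotp d wstar (fst z))\<bar> \<le> 1"

lemma measurable_admissible [measurable]: "Measurable.pred (vec_space d \<Otimes>\<^sub>M borel) admissible"
  unfolding admissible_def by measurable

lemma admissible_bounds:
  "admissible z \<Longrightarrow> vnorm d (fst z) \<le> B \<and> -1 \<le> snd z \<and> snd z \<le> 2"
  using range[of "dotp d wstar (fst z)"] unfolding admissible_def by auto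

lemma admissible_loss_deriv:
  assumes "admissible z"
  shows "\<bar>loss_deriv \<sigma> \<sigma>' d w g z\<bar> \<le> 2 * B * vnorm d g"
    and "\<bar>loss_deriv \<sigma> \<sigma>' d w g z - loss_deriv \<sigma> \<sigma>' d w' g z\<bar>
           \<le> 3 * B\<^sup>2 * vnorm d (\<lambda>i. w i - w' i) * vnorm d g"
  using admissible_bounds[OF assms] by (auto intro!: abs_loss_deriv_le loss_deriv_lipschitz)

lemma AE_D_admissible: "AE z in D. admissible z"
proof -
  have "Measurable.pred (Dx \<Otimes>\<^sub>M Ne) (\<lambda>z. admissible (fst z, \<sigma> (dotp d wstar (fst z)) + snd z))"
    unfolding measurable_DN by measurable
  then have "AE z in Dx \<Otimes>\<^sub>M Ne. admissible (fst z, \<sigma> (dotp d wstar (fst z)) + snd z)"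
    using AE_Dx_vnorm AE_Ne_abs
    by (intro DN.AE_pair_measure) (auto simp: admissible_def pred_def elim!: eventually_mono)
  then show ?thesis
    unfolding glm_dist_def by (subst AE_distr_iff[OF measurable_glm_map]) (auto simp: split_beta)
qed

lemma measurable_loss_deriv [measurable]:
  "loss_deriv \<sigma> \<sigma>' d w g \<in> borel_measurable (vec_space d \<Otimes>\<^sub>M borel)"
  unfolding loss_deriv_def by measurable

lemma integrable_loss_deriv: "integrable D (loss_deriv \<sigma> \<sigma>' d w g)"
proof (rule D.integrable_const_bound[where B = "2 * B * vnorm d g"])
  show "AE z in D. norm (loss_deriv \<sigma> \<sigma>' d w g z) \<le> 2 * B * vnorm d g"
    using AE_D_admissible by eventually_elim (simp add: admissible_loss_deriv)
qed (simp add: measurable_D)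

definition pop_deriv :: "(nat \<Rightarrow> real) \<Rightarrow> (nat \<Rightarrow> real) \<Rightarrow> real" where
  "pop_deriv w g = (\<integral>z. loss_deriv \<sigma> \<sigma>' d w g z \<partial>D)"

lemma pop_deriv_linear: "pop_deriv w g = dotp d g (\<lambda>j. pop_deriv w (unit_vec j))"
proof -
  have "pop_deriv w g = (\<integral>z. (\<Sum>j<d. g j * loss_deriv \<sigma> \<sigma>' d w (unit_vec j) z) \<partial>D)"
    unfolding pop_deriv_def
    by (intro Bochner_Integration.integral_cong refl) (simp add: loss_deriv_linear[where g = g] dotp_def)
  also have "\<dots> = (\<Sum>j<d. g j * pop_deriv w (unit_vec j))"
    by (simp add: pop_deriv_def integrable_loss_deriv)
  finally show ?thesis by (simp add: dotp_def)
qed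

lemma pop_deriv_lipschitz:
  "\<bar>pop_deriv w g - pop_deriv w' g\<bar> \<le> 3 * B\<^sup>2 * vnorm d (\<lambda>i. w i - w' i) * vnorm d g"
proof -
  have "\<bar>\<integral>z. loss_deriv \<sigma> \<sigma>' d w g z - loss_deriv \<sigma> \<sigma>' d w' g z \<partial>D\<bar>
      \<le> (\<integral>z. \<bar>loss_deriv \<sigma> \<sigma>' d w g z - loss_deriv \<sigma> \<sigma>' d w' g z\<bar> \<partial>D)"
    by (rule integral_abs_bound)
  also have "\<dots> \<le> 3 * B\<^sup>2 * vnorm d (\<lambda>i. w i - w' i) * vnorm d g"
    using AE_D_admissible
    by (intro D.integral_le_const) (auto simp: integrable_loss_deriv admissible_loss_deriv
        elim!: eventually_mono)
  finally show ?thesis unfolding pop_deriv_def by (simp add: integrable_loss_deriv)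
qed

text \<open>Integrating out the mean-zero noise.\<close>

lemma pop_deriv_noiseless:
  "pop_deriv w g = (\<integral>x. (\<sigma> (dotp d w x) - \<sigma> (dotp d wstar x)) * \<sigma>' (dotp d w x) * dotp d g x \<partial>Dx)"
proof -
  define T where "T = (\<lambda>(x, e). (x, \<sigma> (dotp d wstar x) + e))"
  define F where "F = (\<lambda>z. loss_deriv \<sigma> \<sigma>' d w g (T z))"
  have T: "T \<in> measurable (Dx \<Otimes>\<^sub>M Ne) (vec_space d \<Otimes>\<^sub>M borel)"
    unfolding T_def by (rule measurable_glm_map)
  have "pop_deriv w g = (\<integral>z. F z \<partial>(Dx \<Otimes>\<^sub>M Ne))"
    unfolding pop_deriv_def F_def glm_dist_def T_def[symmetric]
    by (rule integral_distr[OF T]) measurable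
  moreover have "integrable (Dx \<Otimes>\<^sub>M Ne) F"
    unfolding F_def using integrable_loss_deriv[of w g]
    by (intro integrable_distr[OF T]) (simp add: glm_dist_def T_def)
  ultimately have "pop_deriv w g = (\<integral>x. (\<integral>e. F (x, e) \<partial>Ne) \<partial>Dx)"
    by (simp add: DN.integral_fst')
  also have "\<dots> = (\<integral>x. (\<sigma> (dotp d w x) - \<sigma> (dotp d wstar x)) * \<sigma>' (dotp d w x) * dotp d g x \<partial>Dx)"
  proof (intro Bochner_Integration.integral_cong refl)
    fix x
    let ?h = "(\<sigma> (dotp d w x) - \<sigma> (dotp d wstar x)) * \<sigma>' (dotp d w x) * dotp d g x"
    let ?k = "\<sigma>' (dotp d w x) * dotp d g x"
    have "F (x, e) = ?h - e * ?k" for e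
      unfolding F_def T_def loss_deriv_def by (simp add: algebra_simps)
    moreover have "integrable Ne (\<lambda>e. e)"
      using AE_Ne_abs by (intro Ne.integrable_const_bound[where B = 1]) (auto simp: measurable_cong_sets[OF sets_Ne refl])
    ultimately show "(\<integral>e. F (x, e) \<partial>Ne) = ?h"
      by (simp add: Ne.prob_space noise_mean)
  qed
  finally show ?thesis .
qed

lemma AE_abs_dotp_le: "AE x in Dx. \<bar>dotp d v x\<bar> \<le> vnorm d v * B"
  using AE_Dx_vnorm by eventually_elim (rule abs_dotp_le_bound)

lemma integrable_dotp_sq: "integrable Dx (\<lambda>x. (dotp d v x)\<^sup>2)"
  using AE_abs_dotp_le[of v]
  by (intro Dx.integrable_const_bound[where B = "(vnorm d v * B)\<^sup>2"])
    (auto simp: measurable_Dx abs_le_square_iff[symmetric] elim!: eventually_mono)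

lemma integrable_noiseless_deriv:
  "integrable Dx (\<lambda>x. (\<sigma> (dotp d w x) - \<sigma> (dotp d wstar x)) * \<sigma>' (dotp d w x) * dotp d g x)"
proof (rule Dx.integrable_const_bound[where B = "2 * (vnorm d g * B)"])
  show "AE x in Dx. norm ((\<sigma> (dotp d w x) - \<sigma> (dotp d wstar x)) * \<sigma>' (dotp d w x) * dotp d g x)
      \<le> 2 * (vnorm d g * B)"
    using AE_abs_dotp_le[of g]
  proof eventually_elim
    case (elim x)
    have "\<bar>\<sigma> (dotp d w x) - \<sigma> (dotp d wstar x)\<bar> \<le> 2"
      using range[of "dotp d w x"] range[of "dotp d wstar x"] by auto
    then have "\<bar>\<sigma> (dotp d w x) - \<sigma> (dotp d wstar x)\<bar> * \<bar>\<sigma>' (dotp d w x)\<bar> * \<bar>dotp d g x\<bar>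
        \<le> 2 * 1 * (vnorm d g * B)"
      by (intro mult_mono elim deriv_bounded) auto
    then show ?case by (simp add: abs_mult)
  qed
qed (simp add: measurable_Dx)

lemma pop_deriv_strongly_monotone:
  assumes w: "vnorm d w \<le> R"
  shows "\<gamma>\<^sup>2 * lam * (vnorm d (\<lambda>i. w i - wstar i))\<^sup>2 \<le> pop_deriv w (\<lambda>i. w i - wstar i)"
proof -
  define u where "u = (\<lambda>i. w i - wstar i)"
  have "\<gamma>\<^sup>2 * lam * (vnorm d u)\<^sup>2 = \<gamma>\<^sup>2 * (lam * (\<Sum>i<d. (u i)\<^sup>2))"
    unfolding L2_set_def by (simp add: sum_nonneg)
  also have "\<dots> \<le> \<gamma>\<^sup>2 * (\<integral>x. (dotp d u x)\<^sup>2 \<partial>Dx)"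
    by (intro mult_left_mono covariance_lower) auto
  also have "\<dots> = (\<integral>x. \<gamma>\<^sup>2 * (dotp d u x)\<^sup>2 \<partial>Dx)" by simp
  also have "\<dots> \<le> (\<integral>x. (\<sigma> (dotp d w x) - \<sigma> (dotp d wstar x)) * \<sigma>' (dotp d w x) * dotp d u x \<partial>Dx)"
  proof (rule integral_mono_AE)
    show "AE x in Dx. \<gamma>\<^sup>2 * (dotp d u x)\<^sup>2
        \<le> (\<sigma> (dotp d w x) - \<sigma> (dotp d wstar x)) * \<sigma>' (dotp d w x) * dotp d u x"
      using AE_abs_dotp_le[of w] AE_abs_dotp_le[of wstar]
    proof eventually_elim
      case (elim x)
      have "vnorm d w * B \<le> B * R" "vnorm d wstar * B \<le> B * R"
        using w wstar B_pos by (simp_all add: mult.commute)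
      then have "dotp d w x \<in> {-(B*R)..B*R}" "dotp d wstar x \<in> {-(B*R)..B*R}"
        using elim by (auto simp: abs_le_iff)
      from secant_deriv_ge[OF deriv_lower _ this] gamma_pos
      show ?case unfolding u_def dotp_diff_left by simp
    qed
  qed (simp_all add: integrable_dotp_sq integrable_noiseless_deriv)
  also have "\<dots> = pop_deriv w u" by (rule pop_deriv_noiseless[symmetric])
  finally show ?thesis unfolding u_def .
qed

lemma lam_le_B_sq:
  assumes "d > 0"
  shows "lam \<le> B\<^sup>2"
proof -
  have "AE x in Dx. (dotp d (unit_vec 0) x)\<^sup>2 \<le> B\<^sup>2"
    using AE_Dx_vnorm
  proof eventually_elim
    case (elim x)
    then have "\<bar>dotp d (unit_vec 0) x\<bar> \<le> B"
      using dotp_unit_vec[OF assms] abs_le_vnorm[OF assms, of x] by simp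
    then show ?case by (simp add: abs_le_square_iff[symmetric])
  qed
  then have "(\<integral>x. (dotp d (unit_vec 0) x)\<^sup>2 \<partial>Dx) \<le> B\<^sup>2"
    by (intro Dx.integral_le_const integrable_dotp_sq)
  moreover have "(\<Sum>i<d. (unit_vec 0 i)\<^sup>2) = dotp d (unit_vec 0) (unit_vec 0)"
    by (simp add: dotp_def power2_eq_square)
  then have "(\<Sum>i<d. (unit_vec 0 i)\<^sup>2) = 1"
    using dotp_unit_vec[OF assms] by (simp add: unit_vec_def)
  ultimately show ?thesis
    using covariance_lower[of "unit_vec 0"] by simp
qed

end

section \<open>Concentration\<close>

lemma (in prob_space) prob_Diff_UNION_ge:
  fixes \<epsilon> :: real
  assumes "finite G" "A \<in> events" "prob A = 1"
    and "\<And>p. p \<in> G \<Longrightarrow> U p \<in> events" "\<And>p. p \<in> G \<Longrightarrow> prob (U p) \<le> \<epsilon>"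
  shows "1 - card G * \<epsilon> \<le> prob (A - (\<Union>p\<in>G. U p))"
proof -
  have "prob (\<Union>p\<in>G. U p) \<le> (\<Sum>p\<in>G. prob (U p))"
    using assms by (intro measure_UNION_le) auto
  also have "\<dots> \<le> card G * \<epsilon>"
    using assms sum_bounded_above[of G "\<lambda>p. prob (U p)" \<epsilon>] by simp
  finally have union: "prob (\<Union>p\<in>G. U p) \<le> card G * \<epsilon>" .
  have "prob A \<le> prob ((A - (\<Union>p\<in>G. U p)) \<union> (\<Union>p\<in>G. U p))"
    using assms by (intro finite_measure_mono) auto
  also have "\<dots> \<le> prob (A - (\<Union>p\<in>G. U p)) + prob (\<Union>p\<in>G. U p)"
    using assms by (intro measure_Un_le) auto
  finally show ?thesis using assms(3) union by linarith
qed

context glm_setting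
begin

abbreviation Ms :: "(nat \<Rightarrow> (nat \<Rightarrow> real) \<times> real) measure" where
  "Ms \<equiv> sample_measure n D"

sublocale Ms: prob_space Ms
  unfolding sample_measure_def by (intro prob_space_PiM D.prob_space_axioms)

lemma measurable_sample_component [measurable]: "i < n \<Longrightarrow> (\<lambda>S. S i) \<in> measurable Ms D"
  unfolding sample_measure_def by (intro measurable_component_singleton) auto

lemma distr_sample_component: "i < n \<Longrightarrow> distr Ms D (\<lambda>S. S i) = D"
  unfolding sample_measure_def by (intro distr_PiM_component D.prob_space_axioms) auto

lemma AE_samples_admissible: "AE S in Ms. \<forall>i<n. admissible (S i)"
proof -
  have "AE S in Ms. \<forall>i\<in>{..<n}. admissible (S i)"
    unfolding sample_measure_def
    by (intro AE_finite_allI AE_PiM_component D.prob_space_axioms AE_D_admissible) auto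
  then show ?thesis by auto
qed

lemma indep_sample_components:
  assumes "n > 0"
  shows "Ms.indep_vars (\<lambda>_. D) (\<lambda>i S. S i) {..<n}"
proof -
  have "distr Ms (\<Pi>\<^sub>M i\<in>{..<n}. D) (\<lambda>x. \<lambda>i\<in>{..<n}. x i) = distr Ms Ms (\<lambda>x. x)"
    unfolding sample_measure_def
    by (intro distr_cong refl) (auto simp: space_PiM PiE_def extensional_def restrict_def fun_eq_iff)
  moreover have "(\<Pi>\<^sub>M i\<in>{..<n}. distr Ms D (\<lambda>S. S i)) = (\<Pi>\<^sub>M i\<in>{..<n}. D)"
    by (intro PiM_cong refl distr_sample_component) auto
  ultimately show ?thesis
    using assms by (subst Ms.indep_vars_iff_distr_eq_PiM') (auto simp: sample_measure_def)
qed

definition deviation_event :: "(nat \<Rightarrow> real) \<Rightarrow> (nat \<Rightarrow> real) \<Rightarrow> real \<Rightarrow> (nat \<Rightarrow> (nat \<Rightarrow> real) \<times> real) set" where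
  "deviation_event w g t =
     {S \<in> space Ms. t \<le> \<bar>(\<Sum>i<n. loss_deriv \<sigma> \<sigma>' d w g (S i)) / n - pop_deriv w g\<bar>}"

lemma deviation_event_sets: "deviation_event w g t \<in> sets Ms"
proof -
  have "(\<lambda>S. loss_deriv \<sigma> \<sigma>' d w g (S i)) \<in> borel_measurable Ms" if "i < n" for i
    using that by (intro measurable_compose[OF measurable_sample_component]) (auto simp: measurable_D)
  then show ?thesis unfolding deviation_event_def by measurable
qed

lemma abs_loss_deriv_sample_le:
  assumes "vnorm d g \<le> 3/2" "i < n"
  shows "AE S in Ms. \<bar>loss_deriv \<sigma> \<sigma>' d w g (S i)\<bar> \<le> 3 * B"
  using AE_samples_admissible
proof eventually_elim
  case (elim S)
  then have "\<bar>loss_deriv \<sigma> \<sigma>' d w g (S i)\<bar> \<le> 2 * B * vnorm d g"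
    using assms(2) by (simp add: admissible_loss_deriv)
  also have "\<dots> \<le> 2 * B * (3/2)" using assms(1) B_pos by (intro mult_left_mono) auto
  finally show ?case by simp
qed

lemma expectation_loss_deriv_sample:
  assumes "i < n"
  shows "Ms.expectation (\<lambda>S. loss_deriv \<sigma> \<sigma>' d w g (S i)) = pop_deriv w g"
proof -
  have "Ms.expectation (\<lambda>S. loss_deriv \<sigma> \<sigma>' d w g (S i))
      = (\<integral>z. loss_deriv \<sigma> \<sigma>' d w g z \<partial>distr Ms D (\<lambda>S. S i))"
    using assms by (subst integral_distr) (auto simp: measurable_D)
  then show ?thesis using assms by (simp add: distr_sample_component pop_deriv_def)
qed

lemma hoeffding_loss_deriv:
  fixes t :: real
  assumes n: "n > 0" and g: "vnorm d g \<le> 3/2" and t: "t \<ge> 0"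
  shows "Ms.prob (deviation_event w g t) \<le> 2 * exp (- (n * t\<^sup>2) / (18 * B\<^sup>2))"
proof -
  define X :: "nat \<Rightarrow> (nat \<Rightarrow> (nat \<Rightarrow> real) \<times> real) \<Rightarrow> real"
    where "X = (\<lambda>i S. loss_deriv \<sigma> \<sigma>' d w g (S i))"
  have "Ms.indep_vars (\<lambda>_. borel) X {..<n}"
    unfolding X_def by (rule Ms.indep_vars_compose2[OF indep_sample_components[OF n]]) (simp add: measurable_D)
  moreover have "AE S in Ms. X i S \<in> {-(3*B)..3*B}" if "i \<in> {..<n}" for i
    using abs_loss_deriv_sample_le[OF g, of i w] that unfolding X_def by (auto simp: abs_le_iff)
  ultimately interpret indep_interval_bounded_random_variables Ms "{..<n}" X "\<lambda>_. -(3*B)" "\<lambda>_. 3*B"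
    by unfold_locales auto
  have mean: "(\<Sum>i\<in>{..<n}. Ms.expectation (X i)) = n * pop_deriv w g"
    unfolding X_def by (simp add: expectation_loss_deriv_sample)
  interpret hoeffding: Hoeffding_ineq Ms "{..<n}" X "\<lambda>_. -(3*B)" "\<lambda>_. 3*B" "n * pop_deriv w g"
    by unfold_locales (simp add: mean)
  have "Ms.prob {S \<in> space Ms. n * t \<le> \<bar>(\<Sum>i\<in>{..<n}. X i S) - n * pop_deriv w g\<bar>}
      \<le> 2 * exp (-2 * (n * t)\<^sup>2 / (\<Sum>i\<in>{..<n}. (3*B - -(3*B))\<^sup>2))"
    using n t B_pos by (intro hoeffding.Hoeffding_ineq_abs_ge) auto
  moreover have "-2 * (n * t)\<^sup>2 / (\<Sum>i\<in>{..<n}. (3*B - -(3*B))\<^sup>2) = - (n * t\<^sup>2) / (18 * B\<^sup>2)"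
    using n B_pos by (simp add: power2_eq_square field_simps)
  moreover have "n * t \<le> \<bar>(\<Sum>i<n. X i S) - n * pop_deriv w g\<bar>
      \<longleftrightarrow> t \<le> \<bar>(\<Sum>i<n. X i S) / n - pop_deriv w g\<bar>" for S
  proof -
    have "(\<Sum>i<n. X i S) - n * pop_deriv w g = n * ((\<Sum>i<n. X i S) / n - pop_deriv w g)"
      using n by (simp add: field_simps)
    then show ?thesis using n by (simp add: abs_mult)
  qed
  ultimately show ?thesis unfolding X_def deviation_event_def by simp
qed

lemma uniform_deviation:
  fixes t :: real
  assumes n: "n > 0" and G: "finite G" "\<forall>(w, g)\<in>G. vnorm d g \<le> 3/2"
    and t: "t \<ge> 0" "card G * (2 * exp (- (n * t\<^sup>2) / (18 * B\<^sup>2))) \<le> \<delta>"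
  shows "\<exists>E\<in>sets Ms. 1 - \<delta> \<le> measure Ms E \<and>
           (\<forall>S\<in>E. (\<forall>i<n. admissible (S i)) \<and>
              (\<forall>(w, g)\<in>G. \<bar>(\<Sum>i<n. loss_deriv \<sigma> \<sigma>' d w g (S i)) / n - pop_deriv w g\<bar> < t))"
proof -
  define bad where "bad p = deviation_event (fst p) (snd p) t" for p
  have bad_sets: "bad p \<in> sets Ms" for p
    unfolding bad_def by (rule deviation_event_sets)
  have bad_le: "Ms.prob (bad p) \<le> 2 * exp (- (n * t\<^sup>2) / (18 * B\<^sup>2))" if "p \<in> G" for p
  proof -
    have "vnorm d (snd p) \<le> 3/2" using G(2) that by auto
    then show ?thesis unfolding bad_def by (intro hoeffding_loss_deriv n t(1))
  qed
  define A where "A = {S \<in> space Ms. \<forall>i<n. admissible (S i)}"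
  have A_sets: "A \<in> sets Ms"
  proof -
    have "Measurable.pred Ms (\<lambda>S. admissible (S i))" if "i < n" for i
      using that by (intro measurable_compose[OF measurable_sample_component]) (auto simp: measurable_D)
    then show ?thesis unfolding A_def by measurable
  qed
  have "Ms.prob A = 1"
    using Ms.prob_Collect_eq_1[OF A_sets[unfolded A_def]] AE_samples_admissible unfolding A_def by simp
  define E where "E = A - (\<Union>p\<in>G. bad p)"
  have "E \<in> sets Ms" unfolding E_def using A_sets bad_sets G(1) by (intro sets.Diff sets.finite_UN) auto
  moreover have "1 - card G * (2 * exp (- (n * t\<^sup>2) / (18 * B\<^sup>2))) \<le> Ms.prob E"
    unfolding E_def
    by (rule Ms.prob_Diff_UNION_ge) (use G(1) A_sets \<open>Ms.prob A = 1\<close> bad_sets bad_le in auto)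
  then have "1 - \<delta> \<le> Ms.prob E" using t(2) by linarith
  moreover have "\<forall>S\<in>E. (\<forall>i<n. admissible (S i)) \<and>
      (\<forall>(w, g)\<in>G. \<bar>(\<Sum>i<n. loss_deriv \<sigma> \<sigma>' d w g (S i)) / n - pop_deriv w g\<bar> < t)"
    unfolding E_def A_def bad_def deviation_event_def by (auto simp: not_le)
  ultimately show ?thesis by blast
qed

lemma diameter_le_error_bound:
  assumes "d > 0" "1 \<le> X"
  shows "2 * R \<le> 24 * B / (\<gamma>\<^sup>2 * lam) * sqrt X"
proof -
  have "2 * (B * R) * \<gamma> \<le> 1"
    by (rule interval_deriv_bound_le_one[of "B * R", OF deriv_lower]) (use B_pos R_pos in simp_all)
  then have "(\<gamma> * (B * R))\<^sup>2 \<le> (1/2)\<^sup>2"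
    using gamma_pos B_pos R_pos by (intro power_mono) (simp_all add: mult_ac)
  then have "2 * (\<gamma> * (B * R))\<^sup>2 / R \<le> 2 * (1/2)\<^sup>2 / R"
    using R_pos by (intro divide_right_mono) auto
  moreover have "2 * R * (\<gamma>\<^sup>2 * B\<^sup>2) = 2 * (\<gamma> * (B * R))\<^sup>2 / R"
    using R_pos by (simp add: power2_eq_square field_simps)
  moreover have "2 * (1/2)\<^sup>2 / R \<le> B / 2"
    using BR R_pos by (simp add: power2_eq_square field_simps)
  moreover have "2 * R * (\<gamma>\<^sup>2 * lam) \<le> 2 * R * (\<gamma>\<^sup>2 * B\<^sup>2)"
    using lam_le_B_sq[OF assms(1)] R_pos by (intro mult_left_mono) auto
  ultimately have "2 * R * (\<gamma>\<^sup>2 * lam) \<le> 24 * B" using B_pos by linarith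
  then have "2 * R \<le> 24 * B / (\<gamma>\<^sup>2 * lam)"
    using gamma_pos lam_pos by (simp add: pos_le_divide_eq)
  also have "\<dots> \<le> 24 * B / (\<gamma>\<^sup>2 * lam) * sqrt X"
    using mult_left_mono[of 1 "sqrt X" "24 * B / (\<gamma>\<^sup>2 * lam)"] assms(2) B_pos gamma_pos lam_pos
    by simp
  finally show ?thesis .
qed

lemma critical_point_error_le:
  assumes n: "n > 0" and d: "d > 0" and t: "t \<ge> 0"
    and samples: "\<forall>i<n. admissible (S i)"
    and close: "\<forall>(w', g)\<in>param_net d n B R \<times> direction_net d.
                  \<bar>(\<Sum>i<n. loss_deriv \<sigma> \<sigma>' d w' g (S i)) / n - pop_deriv w' g\<bar> < t"
    and w: "vnorm d w \<le> R" and critical: "grad_zero d (emp_risk d n \<sigma> S) w"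
  shows "vnorm d (\<lambda>i. w i - wstar i) \<le> (2 * t + 9 * B / n) / (\<gamma>\<^sup>2 * lam)"
proof (rule critical_point_bound[where P = pop_deriv, OF pop_deriv_linear pop_deriv_lipschitz
      pop_deriv_strongly_monotone[OF w] _ n d B_pos t _ _ w critical])
  show "0 < \<gamma>\<^sup>2 * lam" using gamma_pos lam_pos by simp
  show "vnorm d (fst (S i)) \<le> B \<and> -1 \<le> snd (S i) \<and> snd (S i) \<le> 2" if "i < n" for i
    using samples that admissible_bounds by blast
  show "\<bar>(\<Sum>i<n. loss_deriv \<sigma> \<sigma>' d w' g (S i)) / n - pop_deriv w' g\<bar> < t"
    if "w' \<in> param_net d n B R" "g \<in> direction_net d" for w' g
    using bspec[OF close, of "(w', g)"] that by simp
qed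

lemma critical_points_near_wstar_dim_le:
  assumes n: "n > 0" and d: "0 < d" "d \<le> n" and \<delta>: "0 < \<delta>" "\<delta> < 1"
  shows "\<exists>E\<in>sets Ms. 1 - \<delta> \<le> measure Ms E \<and>
    (\<forall>S\<in>E. \<forall>w. vnorm d w \<le> R \<and> grad_zero d (emp_risk d n \<sigma> S) w \<longrightarrow>
       vnorm d (\<lambda>i. w i - wstar i) \<le> 24 * B / (\<gamma>\<^sup>2 * lam) *
          sqrt ((real d * (30 + ln (real n * B * R)) + ln (1 / \<delta>)) / real n))"
proof -
  define G where "G = param_net d n B R \<times> direction_net d"
  define t where "t = 3 * B * sqrt (2 * ln (2 * real (card G) / \<delta>) / n)"
  note N = card_nets[OF n d(1) B_pos R_pos BR, folded G_def]
  have directions: "\<forall>(w, g)\<in>G. vnorm d g \<le> 3/2" by (auto simp: G_def direction_net_def)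
  have t0: "0 \<le> t" and card_le: "card G * (2 * exp (- (n * t\<^sup>2) / (18 * B\<^sup>2))) \<le> \<delta>"
    using hoeffding_radius[OF n B_pos N(1) \<delta>] unfolding t_def by simp_all
  have deviation: "\<exists>E\<in>sets Ms. 1 - \<delta> \<le> measure Ms E \<and>
      (\<forall>S\<in>E. (\<forall>i<n. admissible (S i)) \<and>
        (\<forall>(w, g)\<in>G. \<bar>(\<Sum>i<n. loss_deriv \<sigma> \<sigma>' d w g (S i)) / n - pop_deriv w g\<bar> < t))"
    by (rule uniform_deviation[OF n _ directions t0 card_le]) (simp add: G_def finite_param_net finite_direction_net)
  have "0 \<le> ln (1 / \<delta>)" using \<delta> by simp
  moreover have "1 * 1 \<le> real n * (B * R)" using n BR by (intro mult_mono) auto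
  ultimately have "1 \<le> real d * (30 + ln (real n * B * R)) + ln (1 / \<delta>)"
    using d mult_mono[of 1 "real d" 1 "30 + ln (real n * B * R)"] by (simp add: mult.assoc)
  with ln_net_size_le[OF d B_pos R_pos BR \<delta> N] have rate:
    "2 * t + 9 * B / n \<le> 24 * B * sqrt ((real d * (30 + ln (real n * B * R)) + ln (1 / \<delta>)) / n)"
    unfolding t_def by (intro deviation_rate_le[OF n B_pos])
  from deviation show ?thesis
  proof (elim bexE conjE)
    fix E assume "E \<in> sets Ms" "1 - \<delta> \<le> measure Ms E" and good: "\<forall>S\<in>E. (\<forall>i<n. admissible (S i)) \<and>
        (\<forall>(w, g)\<in>G. \<bar>(\<Sum>i<n. loss_deriv \<sigma> \<sigma>' d w g (S i)) / n - pop_deriv w g\<bar> < t)"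
    show ?thesis
    proof (intro bexI[of _ E] conjI ballI allI impI)
      fix S w assume "S \<in> E" and "vnorm d w \<le> R \<and> grad_zero d (emp_risk d n \<sigma> S) w"
      with bspec[OF good] have "vnorm d (\<lambda>i. w i - wstar i) \<le> (2 * t + 9 * B / n) / (\<gamma>\<^sup>2 * lam)"
        unfolding G_def by (intro critical_point_error_le[OF n d(1) t0]) auto
      also have "\<dots> \<le> 24 * B * sqrt ((real d * (30 + ln (real n * B * R)) + ln (1 / \<delta>)) / n) / (\<gamma>\<^sup>2 * lam)"
        using rate gamma_pos lam_pos by (intro divide_right_mono) auto
      finally show "vnorm d (\<lambda>i. w i - wstar i) \<le> 24 * B / (\<gamma>\<^sup>2 * lam) *
          sqrt ((real d * (30 + ln (real n * B * R)) + ln (1 / \<delta>)) / real n)" by simp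
    qed fact+
  qed
qed

lemma critical_points_near_wstar:
  assumes n: "n > 0" and \<delta>: "0 < \<delta>" "\<delta> < 1"
  shows "\<exists>E\<in>sets Ms. 1 - \<delta> \<le> measure Ms E \<and>
    (\<forall>S\<in>E. \<forall>w. vnorm d w \<le> R \<and> grad_zero d (emp_risk d n \<sigma> S) w \<longrightarrow>
       vnorm d (\<lambda>i. w i - wstar i) \<le> 24 * B / (\<gamma>\<^sup>2 * lam) *
          sqrt ((real d * (30 + ln (real n * B * R)) + ln (1 / \<delta>)) / real n))"
    (is "\<exists>E\<in>sets Ms. _ \<and> (\<forall>S\<in>E. \<forall>w. _ \<longrightarrow> _ \<le> ?r)")
proof -
  have whole_space: ?thesis if "\<And>w. vnorm d w \<le> R \<Longrightarrow> vnorm d (\<lambda>i. w i - wstar i) \<le> ?r"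
    using that \<delta> by (intro bexI[of _ "space Ms"]) (auto simp: Ms.prob_space)
  have "1 * 1 \<le> real n * (B * R)" using n BR by (intro mult_mono) auto
  then have ln_nBR: "0 \<le> ln (real n * B * R)" by (simp add: mult.assoc)
  consider "d = 0" | "n < d" | "0 < d" "d \<le> n" by linarith
  then show ?thesis
  proof cases
    case 1
    have "0 \<le> ?r" using ln_nBR \<delta> B_pos gamma_pos lam_pos by simp
    with 1 show ?thesis by (intro whole_space) simp
  next
    case 2
    have "real n * 1 \<le> real d * (30 + ln (real n * B * R))"
      using 2 ln_nBR by (intro mult_mono) auto
    moreover have "0 \<le> ln (1 / \<delta>)" using \<delta> by simp
    ultimately have "1 \<le> (real d * (30 + ln (real n * B * R)) + ln (1 / \<delta>)) / real n"
      using n by (simp add: field_simps)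
    from diameter_le_error_bound[OF _ this] 2 have "2 * R \<le> ?r" by simp
    then have "vnorm d (\<lambda>i. w i - wstar i) \<le> ?r" if "vnorm d w \<le> R" for w
      using vnorm_diff_le[of w wstar d] wstar that by linarith
    then show ?thesis by (rule whole_space)
  next
    case 3
    then show ?thesis using critical_points_near_wstar_dim_le n \<delta> by blast
  qed
qed

end

lemma glm_critical_points_near_wstar:
  assumes "covariates_ok d B lam Dx" "L2_set wstar {..<d} \<le> R" "B * R \<ge> 1"
    and "link_ok \<sigma> B R \<gamma>" "noise_ok Ne" "n > 0" "0 < \<delta>" "\<delta> < 1"
  shows "\<exists>E \<in> sets (sample_measure n (glm_dist d \<sigma> wstar Dx Ne)).
       measure (sample_measure n (glm_dist d \<sigma> wstar Dx Ne)) E \<ge> 1 - \<delta> \<and>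
       (\<forall>S\<in>E. \<forall>w. L2_set w {..<d} \<le> R \<and> grad_zero d (emp_risk d n \<sigma> S) w \<longrightarrow>
          L2_set (\<lambda>i. w i - wstar i) {..<d} \<le>
            24 * B / (\<gamma>\<^sup>2 * lam) * sqrt ((real d * (30 + ln (real n * B * R)) + ln (1 / \<delta>)) / real n))"
proof -
  obtain \<sigma>' \<sigma>'' where "smooth_link \<sigma> \<sigma>' \<sigma>''" "\<And>t. t \<in> {-(B*R)..B*R} \<Longrightarrow> \<gamma> \<le> \<sigma>' t" "\<gamma> > 0"
    using assms(4) unfolding link_ok_def smooth_link_def by blast
  then interpret glm_setting \<sigma> \<sigma>' \<sigma>'' d n B R lam \<gamma> wstar Dx Ne
    using assms(1-5) by (intro glm_setting.intro glm_setting_axioms.intro) auto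
  show ?thesis using critical_points_near_wstar assms(6-8) by simp
qed

theorem theorem3p2:
  shows "\<exists>C1>0. \<exists>C2>0. \<forall>(d::nat) (n::nat) (B::real) (R::real) (lam::real) (\<gamma>::real)
      (\<sigma>::real \<Rightarrow> real) (wstar::nat \<Rightarrow> real) (Dx::(nat \<Rightarrow> real) measure) (Ne::real measure) (\<delta>::real).
    covariates_ok d B lam Dx \<and> L2_set wstar {..<d} \<le> R \<and> B * R \<ge> 1 \<and>
    link_ok \<sigma> B R \<gamma> \<and> noise_ok Ne \<and> n > 0 \<and> 0 < \<delta> \<and> \<delta> < 1 \<longrightarrow>
    (\<exists>E \<in> sets (sample_measure n (glm_dist d \<sigma> wstar Dx Ne)).
       measure (sample_measure n (glm_dist d \<sigma> wstar Dx Ne)) E \<ge> 1 - \<delta> \<and>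
       (\<forall>S\<in>E. \<forall>w::nat \<Rightarrow> real.
          L2_set w {..<d} \<le> R \<and> grad_zero d (emp_risk d n \<sigma> S) w \<longrightarrow>
          L2_set (\<lambda>i. w i - wstar i) {..<d} \<le>
            C1 * B / (\<gamma>\<^sup>2 * lam) *
            sqrt ((real d * (C2 + ln (real n * B * R)) + ln (1 / \<delta>)) / real n)))"
  by (rule exI[of _ "24::real"], rule conjI, simp, rule exI[of _ "30::real"], rule conjI, simp)
    (blast intro: glm_critical_points_near_wstar)

end
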